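(* For every bisection $\mathcal{S}=(S,\overline{S})$ and every stubborn vertex $x\in S$, it holds that $-a_x\le\mathrm{def}_{\mathcal{S}}(x)\le a_x$.
   Context: $G$ is a finite simple undirected graph with an odd number $n$ of vertices; $d(x)$ is the degree of $x$. Each vertex $x$ has stubbornness $\alpha_x\in(0,1)$ and $a_x=\lfloor\alpha_x/(1-\alpha_x)\rfloor$. A vertex $x$ is stubborn if $a_x\ge\min\{d(x),n-d(x)-1\}$. $W(A,B)$ is the number of edges with one endpoint in $A$ and the other in $B$. A bisection $(S,\overline{S})$ partitions the vertices with $|S|=\frac{n+1}{2}$, $|\overline{S}|=\frac{n-1}{2}$. For $x\in S$, $\mathrm{def}_{\mathcal{S}}(x)=W(x,S)-W(x,\overline{S})$. *)

theory Defs
  imports Complex_Main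
begin

definition simple_graph :: "'a set \<Rightarrow> ('a \<Rightarrow> 'a \<Rightarrow> bool) \<Rightarrow> bool" where
  "simple_graph V E \<longleftrightarrow> finite V \<and> (\<forall>u v. E u v \<longrightarrow> E v u) \<and> (\<forall>u. \<not> E u u)
     \<and> (\<forall>u v. E u v \<longrightarrow> u \<in> V \<and> v \<in> V)"

definition degree :: "'a set \<Rightarrow> ('a \<Rightarrow> 'a \<Rightarrow> bool) \<Rightarrow> 'a \<Rightarrow> nat" where
  "degree V E x = card {y \<in> V. E x y}"

definition W :: "('a \<Rightarrow> 'a \<Rightarrow> bool) \<Rightarrow> 'a set \<Rightarrow> 'a set \<Rightarrow> nat" where
  "W E A B = card {e. \<exists>u\<in>A. \<exists>v\<in>B. E u v \<and> e = {u, v}}"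

definition a_val :: "real \<Rightarrow> int" where
  "a_val \<alpha> = \<lfloor>\<alpha> / (1 - \<alpha>)\<rfloor>"

definition stubborn :: "'a set \<Rightarrow> ('a \<Rightarrow> 'a \<Rightarrow> bool) \<Rightarrow> ('a \<Rightarrow> real) \<Rightarrow> 'a \<Rightarrow> bool" where
  "stubborn V E \<alpha> x \<longleftrightarrow>
     a_val (\<alpha> x) \<ge> min (int (degree V E x)) (int (card V) - int (degree V E x) - 1)"

definition bisection :: "'a set \<Rightarrow> 'a set \<Rightarrow> bool" where
  "bisection V S \<longleftrightarrow> S \<subseteq> V \<and> card S = (card V + 1) div 2"

definition deficiency :: "'a set \<Rightarrow> ('a \<Rightarrow> 'a \<Rightarrow> bool) \<Rightarrow> 'a set \<Rightarrow> 'a \<Rightarrow> int" where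
  "deficiency V E S x = int (W E {x} S) - int (W E {x} (V - S))"

end

theory Submission
  imports Defs
begin

text \<open>Write \<open>s\<close> and \<open>t\<close> for the numbers of neighbours of \<open>x\<close> in \<open>S\<close> and in its
complement, so that \<open>def(x) = s - t\<close> and \<open>d(x) = s + t\<close>. Hence \<open>|def(x)| \<le> d(x)\<close>.
Since \<open>|S| - 1 = |V - S|\<close>, the non-neighbours of \<open>x\<close> other than \<open>x\<close> itself split as
\<open>(|S| - 1 - s) + (|S| - 1 - t) = n - d(x) - 1\<close>, whose difference is again \<open>t - s\<close>;
so also \<open>|def(x)| \<le> n - d(x) - 1\<close>, and stubbornness bounds the minimum of the two by \<open>a\<^sub>x\<close>.\<close>

lemma W_singleton: "W E {x} A = card {y \<in> A. E x y}"
proof -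
  have "{e. \<exists>u\<in>{x}. \<exists>v\<in>A. E u v \<and> e = {u, v}} = (\<lambda>y. {x, y}) ` {y \<in> A. E x y}"
    by auto
  moreover have "inj_on (\<lambda>y. {x, y}) {y \<in> A. E x y}"
    by (auto simp: inj_on_def doubleton_eq_iff)
  ultimately show ?thesis
    unfolding W_def by (simp add: card_image)
qed

lemma deficiency_eq_card_neighbours:
  "deficiency V E S x = int (card {y \<in> S. E x y}) - int (card {y \<in> V - S. E x y})"
  by (simp add: deficiency_def W_singleton)

lemma degree_eq_card_neighbours_split:
  assumes "finite V" and "S \<subseteq> V"
  shows "degree V E x = card {y \<in> S. E x y} + card {y \<in> V - S. E x y}"
proof -
  have "{y \<in> V. E x y} = {y \<in> S. E x y} \<union> {y \<in> V - S. E x y}"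
    using assms(2) by auto
  moreover have "finite {y \<in> S. E x y}" and "finite {y \<in> V - S. E x y}"
    using assms by (auto intro: finite_subset)
  ultimately show ?thesis
    unfolding degree_def by (simp add: card_Un_disjoint disjoint_iff)
qed

lemma card_neighbours_le_card_minus_self:
  assumes "finite S" and "x \<in> S" and "\<not> E x x"
  shows "card {y \<in> S. E x y} \<le> card S - 1"
proof -
  have "card {y \<in> S. E x y} \<le> card (S - {x})"
    using assms by (intro card_mono) auto
  with assms(1,2) show ?thesis
    by simp
qed

lemma card_complement_of_bisection:
  assumes "finite V" and "odd (card V)" and "bisection V S"
  shows "card (V - S) = card S - 1"
proof -
  have "S \<subseteq> V" and "card S = (card V + 1) div 2"
    using assms(3) unfolding bisection_def by auto
  moreover have "card (V - S) = card V - card S"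
    using \<open>S \<subseteq> V\<close> assms(1) by (simp add: card_Diff_subset finite_subset)
  ultimately show ?thesis
    using assms(2) by presburger
qed

lemma abs_deficiency_le_degree_bounds:
  assumes "simple_graph V E" and "odd (card V)" and "bisection V S" and "x \<in> S"
  shows "\<bar>deficiency V E S x\<bar> \<le> int (degree V E x)"
    and "\<bar>deficiency V E S x\<bar> \<le> int (card V) - int (degree V E x) - 1"
proof -
  have "finite V" and "\<not> E x x" and "S \<subseteq> V"
    using assms(1,3) unfolding simple_graph_def bisection_def by auto
  then have "finite S" and "finite (V - S)"
    by (auto intro: finite_subset)
  define s where "s = card {y \<in> S. E x y}"
  define t where "t = card {y \<in> V - S. E x y}"
  have def: "deficiency V E S x = int s - int t"
    unfolding s_def t_def by (rule deficiency_eq_card_neighbours)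
  have deg: "degree V E x = s + t"
    unfolding s_def t_def using \<open>finite V\<close> \<open>S \<subseteq> V\<close>
    by (rule degree_eq_card_neighbours_split)
  have s_le: "s \<le> card S - 1"
    unfolding s_def using \<open>finite S\<close> assms(4) \<open>\<not> E x x\<close>
    by (rule card_neighbours_le_card_minus_self)
  have V_minus_S: "card (V - S) = card S - 1"
    using \<open>finite V\<close> assms(2,3) by (rule card_complement_of_bisection)
  have "t \<le> card (V - S)"
    unfolding t_def using \<open>finite (V - S)\<close> by (intro card_mono) auto
  with V_minus_S have t_le: "t \<le> card S - 1"
    by simp
  have "card V = card S + (card S - 1)"
    using V_minus_S card_Diff_subset[OF \<open>finite S\<close> \<open>S \<subseteq> V\<close>]
      card_mono[OF \<open>finite V\<close> \<open>S \<subseteq> V\<close>] by linarith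
  moreover have "card S \<ge> 1"
    using \<open>finite S\<close> assms(4) by (metis One_nat_def Suc_leI card_gt_0_iff empty_iff)
  ultimately show "\<bar>deficiency V E S x\<bar> \<le> int (degree V E x)"
    and "\<bar>deficiency V E S x\<bar> \<le> int (card V) - int (degree V E x) - 1"
    using def deg s_le t_le by linarith+
qed

theorem lemma5:
  fixes V :: "'a set" and E :: "'a \<Rightarrow> 'a \<Rightarrow> bool" and \<alpha> :: "'a \<Rightarrow> real"
    and S :: "'a set" and x :: 'a
  assumes "simple_graph V E"
    and "odd (card V)"
    and "\<forall>v\<in>V. 0 < \<alpha> v \<and> \<alpha> v < 1"
    and "bisection V S"
    and "x \<in> S"
    and "stubborn V E \<alpha> x"
  shows "- a_val (\<alpha> x) \<le> deficiency V E S x \<and> deficiency V E S x \<le> a_val (\<alpha> x)"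
proof -
  have "\<bar>deficiency V E S x\<bar>
      \<le> min (int (degree V E x)) (int (card V) - int (degree V E x) - 1)"
    using abs_deficiency_le_degree_bounds[OF assms(1,2,4,5)] by simp
  also have "\<dots> \<le> a_val (\<alpha> x)"
    using assms(6) unfolding stubborn_def .
  finally show ?thesis
    by linarith
qed

end
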